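(* Let $H$ be a canonical 2-edge-cover of a graph $G=(V,E)$ such that $H$ has $b|H|$ bridges and exactly $t|H|$ edges of $H$ belong to 2EC components of $H$ which are triangles. Assign credits as follows: each 2EC component $C$ of $H$ gets $2$ credits if it has at least 7 edges, $1$ credit if it is a triangle, and $\frac{3}{10}k$ credits if it is a $k$-cycle with $4\le k\le 6$; each connected component of $H$ that is not 2EC gets $1$ credit; each bridge of $H$ gets $\frac14$ credit; each block of $H$ gets $1$ credit. Let $cr(H)$ be the total credits and $cost(H)=|H|+cr(H)$. Then $cost(H)\le\left(\frac{13}{10}+\frac1{30}t-\frac1{20}b\right)|H|$.
   Context: A 2-edge-cover of $G=(V,E)$ is $H\subseteq E$ with every node incident to at least two edges of $H$. A graph is 2EC if connected and it stays connected after removal of any one edge; 2EC components of $H$ are components of $(V,H)$ that are 2EC. In a non-2EC component $C$ of $H$, a bridge is an edge whose removal disconnects $C$; a block is a maximal 2EC subgraph of $C$ with at least 2 nodes; a leaf block is a block incident to exactly one bridge of $C$, an inner block otherwise. $H$ is canonical if: (i) every 2EC component of $H$ is an $i$-cycle ($3\le i\le6$) or has at least 7 edges; (ii) leaf blocks have at least 6 edges and inner blocks at least 4 edges; (iii) no 2-edge-cover of the same size with fewer connected components can be obtained from $H$ by adding up to 3 edges and removing the same number of edges. *)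

theory Defs
  imports Main Complex_Main
begin

definition simple_graph :: "'a set \<Rightarrow> 'a set set \<Rightarrow> bool" where
  "simple_graph V E \<longleftrightarrow> finite V \<and> (\<forall>e\<in>E. e \<subseteq> V \<and> card e = 2)"

definition adj :: "'a set set \<Rightarrow> ('a \<times> 'a) set" where
  "adj F = (\<Union>e\<in>F. {(x, y). x \<in> e \<and> y \<in> e})"

definition connected_graph :: "'a set \<Rightarrow> 'a set set \<Rightarrow> bool" where
  "connected_graph S F \<longleftrightarrow> S \<noteq> {} \<and> (\<forall>e\<in>F. e \<subseteq> S) \<and>
     (\<forall>u\<in>S. \<forall>v\<in>S. (u, v) \<in> (adj F)\<^sup>*)"

definition two_ec :: "'a set \<Rightarrow> 'a set set \<Rightarrow> bool" where
  "two_ec S F \<longleftrightarrow> connected_graph S F \<and> (\<forall>e\<in>F. connected_graph S (F - {e}))"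

definition two_edge_cover :: "'a set \<Rightarrow> 'a set set \<Rightarrow> 'a set set \<Rightarrow> bool" where
  "two_edge_cover V E H \<longleftrightarrow> H \<subseteq> E \<and> (\<forall>v\<in>V. 2 \<le> card {e\<in>H. v \<in> e})"

definition comps :: "'a set \<Rightarrow> 'a set set \<Rightarrow> 'a set set" where
  "comps V H = {C. \<exists>v\<in>V. C = {u\<in>V. (v, u) \<in> (adj H)\<^sup>*}}"

definition comp_edges :: "'a set set \<Rightarrow> 'a set \<Rightarrow> 'a set set" where
  "comp_edges H C = {e\<in>H. e \<subseteq> C}"

definition is_2ec_comp :: "'a set \<Rightarrow> 'a set set \<Rightarrow> 'a set \<Rightarrow> bool" where
  "is_2ec_comp V H C \<longleftrightarrow> C \<in> comps V H \<and> two_ec C (comp_edges H C)"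

definition is_cycle :: "'a set \<Rightarrow> 'a set set \<Rightarrow> nat \<Rightarrow> bool" where
  "is_cycle S F k \<longleftrightarrow> card S = k \<and> card F = k \<and> connected_graph S F \<and>
     (\<forall>v\<in>S. card {e\<in>F. v \<in> e} = 2)"

definition bridges :: "'a set \<Rightarrow> 'a set set \<Rightarrow> 'a set set" where
  "bridges V H = {e\<in>H. \<exists>C\<in>comps V H. \<not> two_ec C (comp_edges H C) \<and> e \<subseteq> C \<and>
      \<not> connected_graph C (comp_edges H C - {e})}"

definition blocks :: "'a set \<Rightarrow> 'a set set \<Rightarrow> ('a set \<times> 'a set set) set" where
  "blocks V H = {(S, F). \<exists>C\<in>comps V H. \<not> two_ec C (comp_edges H C) \<and>
      S \<subseteq> C \<and> F \<subseteq> comp_edges H C \<and> two_ec S F \<and> 2 \<le> card S \<and>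
      (\<forall>S' F'. S \<subseteq> S' \<and> F \<subseteq> F' \<and> S' \<subseteq> C \<and> F' \<subseteq> comp_edges H C \<and> two_ec S' F'
          \<longrightarrow> S' = S \<and> F' = F)}"

definition leaf_block :: "'a set \<Rightarrow> 'a set set \<Rightarrow> 'a set \<Rightarrow> bool" where
  "leaf_block V H S \<longleftrightarrow> card {e\<in>bridges V H. e \<inter> S \<noteq> {}} = 1"

definition canonical :: "'a set \<Rightarrow> 'a set set \<Rightarrow> 'a set set \<Rightarrow> bool" where
  "canonical V E H \<longleftrightarrow> two_edge_cover V E H \<and>
     (\<forall>C\<in>comps V H. two_ec C (comp_edges H C) \<longrightarrow>
        (\<exists>i\<in>{3..6}. is_cycle C (comp_edges H C) i) \<or> 7 \<le> card (comp_edges H C)) \<and>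
     (\<forall>(S, F)\<in>blocks V H. (leaf_block V H S \<longrightarrow> 6 \<le> card F) \<and>
                            (\<not> leaf_block V H S \<longrightarrow> 4 \<le> card F)) \<and>
     \<not> (\<exists>A R. A \<subseteq> E - H \<and> R \<subseteq> H \<and> card A = card R \<and> card A \<le> 3 \<and>
            two_edge_cover V E ((H - R) \<union> A) \<and>
            card (comps V ((H - R) \<union> A)) < card (comps V H))"

definition comp_credit :: "'a set set \<Rightarrow> 'a set \<Rightarrow> real" where
  "comp_credit H C =
     (if two_ec C (comp_edges H C) then
        (if 7 \<le> card (comp_edges H C) then 2
         else if is_cycle C (comp_edges H C) 3 then 1
         else if (\<exists>k\<in>{4..6}. is_cycle C (comp_edges H C) k)
              then 3 / 10 * real (card (comp_edges H C))
         else 0)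
      else 1)"

definition credits :: "'a set \<Rightarrow> 'a set set \<Rightarrow> real" where
  "credits V H = (\<Sum>C\<in>comps V H. comp_credit H C) + 1/4 * real (card (bridges V H))
                 + real (card (blocks V H))"

definition cost :: "'a set \<Rightarrow> 'a set set \<Rightarrow> real" where
  "cost V H = real (card H) + credits V H"

definition triangle_edges :: "'a set \<Rightarrow> 'a set set \<Rightarrow> 'a set set" where
  "triangle_edges V H = \<Union>{comp_edges H C | C. C \<in> comps V H \<and>
      two_ec C (comp_edges H C) \<and> is_cycle C (comp_edges H C) 3}"

end

theory Submission
  imports Defs
begin

(*
  All credits are paid by the edges of H.  A 2EC component with k edges carries at most 3k/10
  credits, plus k/30 if it is a triangle.  Every block has at least 4 edges and every non-2EC
  component contains two distinct leaf blocks with at least 6 edges each, so 3/10 credit per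
  block edge pays 1 for each block and, from the surplus 2 (18/10 - 1) >= 1 of the two leaf
  blocks, 1 for the component.  Edges of 2EC components, bridges and block edges are pairwise
  disjoint, whence cr(H) <= 3/10 (|H| - bH) + tH/30 + bH/4 with bH = #bridges, tH = #triangle
  edges.

  The two leaf blocks lie on the two sides of any bridge uv: among the bridges on u's side,
  one whose far side is inclusion-minimal cuts off a side containing no bridge; that side is
  2EC, maximal, and met by exactly one bridge.
*)

lemma in_adj_iff: "(x, y) \<in> adj F \<longleftrightarrow> (\<exists>e\<in>F. x \<in> e \<and> y \<in> e)"
  unfolding adj_def by auto

lemma rtrancl_adj_sym:
  assumes "(x, y) \<in> (adj F)\<^sup>*"
  shows "(y, x) \<in> (adj F)\<^sup>*"
proof -
  have "sym (adj F)"
    unfolding adj_def sym_def by auto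
  then show ?thesis
    using assms by (meson sym_rtrancl symD)
qed

lemma rtrancl_adj_mono:
  assumes "F \<subseteq> F'" and "(x, y) \<in> (adj F)\<^sup>*"
  shows "(x, y) \<in> (adj F')\<^sup>*"
proof -
  have "adj F \<subseteq> adj F'"
    using assms(1) unfolding adj_def by auto
  then show ?thesis
    using assms(2) rtrancl_mono by blast
qed

lemma rtrancl_adj_closed:
  assumes "(u, w) \<in> (adj F)\<^sup>*" and "u \<in> S" and "\<forall>e\<in>F. e \<subseteq> S"
  shows "w \<in> S"
  using assms by induction (auto simp: in_adj_iff)

lemma rtrancl_adj_Diff_edge:
  assumes "(x, y) \<in> (adj (F - {e}))\<^sup>*" and "e \<subseteq> {x, y}" and "(a, b) \<in> (adj F)\<^sup>*"
  shows "(a, b) \<in> (adj (F - {e}))\<^sup>*"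
  using assms(3)
proof induction
  case (step z z')
  then obtain g where g: "g \<in> F" "z \<in> g" "z' \<in> g"
    by (auto simp: in_adj_iff)
  have "(z, z') \<in> (adj (F - {e}))\<^sup>*"
  proof (cases "g = e")
    case True
    then have "z \<in> {x, y}" and "z' \<in> {x, y}"
      using g assms(2) by auto
    then show ?thesis
      using assms(1) rtrancl_adj_sym by auto
  next
    case False
    then have "(z, z') \<in> adj (F - {e})"
      unfolding in_adj_iff using g by blast
    then show ?thesis
      by simp
  qed
  with step.IH show ?case
    by (rule rtrancl_trans)
qed simp

lemma rtrancl_adj_within_reach:
  assumes "(a, z) \<in> (adj F)\<^sup>*"
  shows "(a, z) \<in> (adj {e \<in> F. e \<subseteq> {w. (a, w) \<in> (adj F)\<^sup>*}})\<^sup>*"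
  using assms
proof induction
  case (step z z')
  then obtain g where g: "g \<in> F" "z \<in> g" "z' \<in> g"
    by (auto simp: in_adj_iff)
  have "(a, w) \<in> (adj F)\<^sup>*" if "w \<in> g" for w
  proof -
    have "(z, w) \<in> adj F"
      unfolding in_adj_iff using g that by blast
    with step.hyps(1) show ?thesis
      by simp
  qed
  then have "g \<subseteq> {w. (a, w) \<in> (adj F)\<^sup>*}"
    by blast
  then have "(z, z') \<in> adj {e \<in> F. e \<subseteq> {w. (a, w) \<in> (adj F)\<^sup>*}}"
    using g by (auto simp: in_adj_iff)
  with step.IH show ?case
    by simp
qed simp

lemma connected_graphI:
  assumes "c \<in> S" and "\<forall>e\<in>F. e \<subseteq> S" and "\<And>a. a \<in> S \<Longrightarrow> (c, a) \<in> (adj F)\<^sup>*"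
  shows "connected_graph S F"
  unfolding connected_graph_def using assms by (blast intro: rtrancl_adj_sym rtrancl_trans)

lemma connected_graph_Un:
  assumes "connected_graph S F" and "connected_graph S' F'" and "S \<inter> S' \<noteq> {}"
  shows "connected_graph (S \<union> S') (F \<union> F')"
proof -
  obtain c where c: "c \<in> S" "c \<in> S'"
    using assms(3) by auto
  have "(c, a) \<in> (adj (F \<union> F'))\<^sup>*" if "a \<in> S \<union> S'" for a
  proof (cases "a \<in> S")
    case True
    then have "(c, a) \<in> (adj F)\<^sup>*"
      using assms(1) c unfolding connected_graph_def by blast
    then show ?thesis
      by (rule rtrancl_adj_mono[rotated]) blast
  next
    case False
    then have "(c, a) \<in> (adj F')\<^sup>*"
      using that assms(2) c unfolding connected_graph_def by blast
    then show ?thesis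
      by (rule rtrancl_adj_mono[rotated]) blast
  qed
  moreover have "\<forall>e\<in>F \<union> F'. e \<subseteq> S \<union> S'"
    using assms(1,2) unfolding connected_graph_def by blast
  ultimately show ?thesis
    using c by (intro connected_graphI) auto
qed

lemma two_ec_connected_Diff: "two_ec S F \<Longrightarrow> connected_graph S (F - {e})"
  unfolding two_ec_def by (cases "e \<in> F") auto

lemma two_ec_edge_subset: "two_ec S F \<Longrightarrow> e \<in> F \<Longrightarrow> e \<subseteq> S"
  unfolding two_ec_def connected_graph_def by blast

lemma two_ec_Un:
  assumes "two_ec S F" and "two_ec S' F'" and "S \<inter> S' \<noteq> {}"
  shows "two_ec (S \<union> S') (F \<union> F')"
proof -
  have "F \<union> F' - {e} = (F - {e}) \<union> (F' - {e})" for e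
    by auto
  then show ?thesis
    using connected_graph_Un[OF two_ec_connected_Diff[OF assms(1)] two_ec_connected_Diff[OF assms(2)] assms(3)]
      connected_graph_Un[of S F S' F'] assms unfolding two_ec_def by auto
qed

lemma comp_credit_le:
  assumes "two_ec C (comp_edges H C)"
  shows "comp_credit H C \<le> 3/10 * real (card (comp_edges H C))
    + (if is_cycle C (comp_edges H C) 3 then real (card (comp_edges H C)) / 30 else 0)"
  using assms unfolding comp_credit_def is_cycle_def by auto

locale finite_two_edge_cover =
  fixes V :: "'a set" and H :: "'a set set"
  assumes finite_V: "finite V"
    and edges: "\<forall>e\<in>H. e \<subseteq> V \<and> card e = 2"
    and degree: "\<forall>v\<in>V. 2 \<le> card {e\<in>H. v \<in> e}"
begin

lemma finite_H: "finite H"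
  using edges finite_V by (metis Pow_iff finite_Pow_iff rev_finite_subset subsetI)

lemma finite_comp_edges: "finite (comp_edges H C)"
  using finite_H unfolding comp_edges_def by simp

lemma edgeE:
  assumes "e \<in> H"
  obtains x y where "e = {x, y}" and "x \<noteq> y"
  using assms edges by (meson card_2_iff)

lemma component_subset: "C \<in> comps V H \<Longrightarrow> C \<subseteq> V"
  unfolding comps_def by auto

lemma finite_comps: "finite (comps V H)"
  using component_subset finite_V by (meson Pow_iff finite_Pow_iff rev_finite_subset subsetI)

lemma component_eq_reach:
  assumes C: "C \<in> comps V H" and "x \<in> C"
  shows "C = {u \<in> V. (x, u) \<in> (adj H)\<^sup>*}"
proof -
  obtain c where c: "C = {u \<in> V. (c, u) \<in> (adj H)\<^sup>*}"
    using C unfolding comps_def by auto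
  then have "(c, x) \<in> (adj H)\<^sup>*" and "(x, c) \<in> (adj H)\<^sup>*"
    using \<open>x \<in> C\<close> rtrancl_adj_sym by auto
  then show ?thesis
    using c by (auto intro: rtrancl_trans)
qed

lemma components_eq:
  "C \<in> comps V H \<Longrightarrow> C' \<in> comps V H \<Longrightarrow> x \<in> C \<Longrightarrow> x \<in> C' \<Longrightarrow> C = C'"
  using component_eq_reach by blast

lemma edge_subset_component:
  assumes C: "C \<in> comps V H" and "x \<in> C" "e \<in> H" "x \<in> e"
  shows "e \<subseteq> C"
proof
  fix w
  assume "w \<in> e"
  then have "(x, w) \<in> adj H" and "w \<in> V"
    using assms edges unfolding in_adj_iff by auto
  then show "w \<in> C"
    using component_eq_reach[OF assms(1,2)] by auto
qed

lemma components_eq_if_edge: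
  assumes "C \<in> comps V H" "C' \<in> comps V H" "e \<in> H" "e \<subseteq> C" "e \<subseteq> C'"
  shows "C = C'"
proof -
  obtain x y where "e = {x, y}"
    using edgeE[OF assms(3)] .
  then show ?thesis
    using assms components_eq by blast
qed

lemma comp_edges_disjoint:
  "C \<in> comps V H \<Longrightarrow> C' \<in> comps V H \<Longrightarrow> C \<noteq> C' \<Longrightarrow> comp_edges H C \<inter> comp_edges H C' = {}"
  using components_eq_if_edge unfolding comp_edges_def by blast

lemma card_Union_comp_edges:
  assumes "T \<subseteq> comps V H"
  shows "card (\<Union>(comp_edges H ` T)) = (\<Sum>C\<in>T. card (comp_edges H C))"
proof (rule card_UN_disjoint)
  show "finite T"
    using assms finite_comps finite_subset by blast
qed (use assms finite_comp_edges comp_edges_disjoint in blast)+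

lemma connected_component:
  assumes C: "C \<in> comps V H"
  shows "connected_graph C (comp_edges H C)"
proof -
  obtain c where "c \<in> V" and c: "C = {u \<in> V. (c, u) \<in> (adj H)\<^sup>*}"
    using C unfolding comps_def by auto
  have reach_C: "{w. (c, w) \<in> (adj H)\<^sup>*} \<subseteq> C"
    using c \<open>c \<in> V\<close> edges rtrancl_adj_closed[of c _ H V] by auto
  have "(c, a) \<in> (adj (comp_edges H C))\<^sup>*" if "a \<in> C" for a
  proof -
    have "(c, a) \<in> (adj {e \<in> H. e \<subseteq> {w. (c, w) \<in> (adj H)\<^sup>*}})\<^sup>*"
      using that c by (auto intro: rtrancl_adj_within_reach)
    moreover have "{e \<in> H. e \<subseteq> {w. (c, w) \<in> (adj H)\<^sup>*}} \<subseteq> comp_edges H C"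
      using reach_C unfolding comp_edges_def by blast
    ultimately show ?thesis
      by (rule rtrancl_adj_mono[rotated])
  qed
  then show ?thesis
    using c \<open>c \<in> V\<close> by (intro connected_graphI[of c]) (auto simp: comp_edges_def)
qed

lemma connected_Diff_edge_if_reach:
  assumes "C \<in> comps V H" and "e \<subseteq> {x, y}"
    and "(x, y) \<in> (adj (comp_edges H C - {e}))\<^sup>*"
  shows "connected_graph C (comp_edges H C - {e})"
  using connected_component[OF assms(1)] rtrancl_adj_Diff_edge[OF assms(3,2)]
  unfolding connected_graph_def by blast

lemma finite_blocks: "finite (blocks V H)"
proof -
  have "blocks V H \<subseteq> Pow V \<times> Pow H"
  proof
    fix b
    assume b: "b \<in> blocks V H"
    obtain S F where SF: "b = (S, F)"
      by fastforce
    obtain C where "C \<in> comps V H" "S \<subseteq> C" "F \<subseteq> comp_edges H C"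
      using b unfolding SF blocks_def by blast
    then show "b \<in> Pow V \<times> Pow H"
      using component_subset[of C] unfolding SF comp_edges_def by auto
  qed
  then show ?thesis
    by (rule finite_subset) (simp add: finite_V finite_H)
qed

lemma blocks_eq_if_common_edge:
  assumes b: "(S, F) \<in> blocks V H" and b': "(S', F') \<in> blocks V H" and "e \<in> F" "e \<in> F'"
  shows "(S, F) = (S', F')"
proof -
  obtain C where C: "C \<in> comps V H" "S \<subseteq> C" "F \<subseteq> comp_edges H C" "two_ec S F"
    and max: "\<forall>S2 F2. S \<subseteq> S2 \<and> F \<subseteq> F2 \<and> S2 \<subseteq> C \<and> F2 \<subseteq> comp_edges H C \<and> two_ec S2 F2
      \<longrightarrow> S2 = S \<and> F2 = F"
    using b unfolding blocks_def by blast
  obtain C' where C': "C' \<in> comps V H" "S' \<subseteq> C'" "F' \<subseteq> comp_edges H C'" "two_ec S' F'"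
    and max': "\<forall>S2 F2. S' \<subseteq> S2 \<and> F' \<subseteq> F2 \<and> S2 \<subseteq> C' \<and> F2 \<subseteq> comp_edges H C' \<and> two_ec S2 F2
      \<longrightarrow> S2 = S' \<and> F2 = F'"
    using b' unfolding blocks_def by blast
  have "e \<in> H"
    using assms(3) C(3) unfolding comp_edges_def by blast
  have "e \<subseteq> S" and "e \<subseteq> S'"
    using two_ec_edge_subset[OF C(4) assms(3)] two_ec_edge_subset[OF C'(4) assms(4)] .
  have "C = C'"
    using components_eq_if_edge[OF C(1) C'(1) \<open>e \<in> H\<close>] \<open>e \<subseteq> S\<close> \<open>e \<subseteq> S'\<close> C(2) C'(2)
    by blast
  obtain x y where "e = {x, y}"
    using edgeE[OF \<open>e \<in> H\<close>] .
  then have "S \<inter> S' \<noteq> {}"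
    using \<open>e \<subseteq> S\<close> \<open>e \<subseteq> S'\<close> by blast
  then have "two_ec (S \<union> S') (F \<union> F')"
    using two_ec_Un[OF C(4) C'(4)] by blast
  moreover have "S \<union> S' \<subseteq> C" and "F \<union> F' \<subseteq> comp_edges H C"
    using C C' \<open>C = C'\<close> by auto
  ultimately have "S \<union> S' = S \<and> F \<union> F' = F" and "S \<union> S' = S' \<and> F \<union> F' = F'"
    using max[rule_format, of "S \<union> S'" "F \<union> F'"] max'[rule_format, of "S \<union> S'" "F \<union> F'"]
      \<open>C = C'\<close> by (blast, blast)
  then show ?thesis
    by auto
qed

lemma block_edge_not_bridge:
  assumes b: "(S, F) \<in> blocks V H" and "e \<in> F"
  shows "e \<notin> bridges V H"
proof
  assume "e \<in> bridges V H"
  then obtain C0 where C0: "e \<in> H" "C0 \<in> comps V H" "e \<subseteq> C0"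
    "\<not> connected_graph C0 (comp_edges H C0 - {e})"
    unfolding bridges_def by blast
  obtain C where C: "C \<in> comps V H" "S \<subseteq> C" "F \<subseteq> comp_edges H C" "two_ec S F"
    using b unfolding blocks_def by blast
  have "e \<subseteq> S"
    using two_ec_edge_subset[OF C(4) \<open>e \<in> F\<close>] .
  then have "C0 = C"
    using components_eq_if_edge[OF C0(2) C(1) C0(1,3)] C(2) by blast
  obtain x y where xy: "e = {x, y}"
    using edgeE[OF C0(1)] .
  have "(x, y) \<in> (adj (F - {e}))\<^sup>*"
    using two_ec_connected_Diff[OF C(4)] \<open>e \<subseteq> S\<close> xy unfolding connected_graph_def by auto
  then have "(x, y) \<in> (adj (comp_edges H C - {e}))\<^sup>*"
    by (rule rtrancl_adj_mono[rotated]) (use C(3) in blast)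
  then show False
    using connected_Diff_edge_if_reach[OF C(1), of e x y] xy C0(4) \<open>C0 = C\<close> by simp
qed

definition side :: "'a set \<Rightarrow> 'a set \<Rightarrow> 'a \<Rightarrow> 'a set" where
  "side C e u = {z \<in> C. (u, z) \<in> (adj (comp_edges H C - {e}))\<^sup>*}"

lemma side_subset: "side C e u \<subseteq> C"
  unfolding side_def by blast

lemma finite_side: "C \<in> comps V H \<Longrightarrow> finite (side C e u)"
  using side_subset[of C e u] component_subset[of C] finite_V by (meson finite_subset subset_trans)

lemma mem_side_self: "u \<in> C \<Longrightarrow> u \<in> side C e u"
  unfolding side_def by blast

lemma mem_side_if_reach:
  assumes "u \<in> C" and "(u, w) \<in> (adj (comp_edges H C - {e}))\<^sup>*"
  shows "w \<in> side C e u"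
proof -
  have "w \<in> C"
    using rtrancl_adj_closed[OF assms(2,1)] unfolding comp_edges_def by blast
  then show ?thesis
    using assms(2) unfolding side_def by blast
qed

lemma edge_subset_side:
  assumes "z \<in> side C e u" and "g \<in> comp_edges H C - {e}" and "z \<in> g"
  shows "g \<subseteq> side C e u"
proof
  fix w
  assume "w \<in> g"
  then have "(z, w) \<in> adj (comp_edges H C - {e})" and "w \<in> C"
    using assms(2,3) unfolding in_adj_iff comp_edges_def by blast+
  then show "w \<in> side C e u"
    using assms(1) unfolding side_def by auto
qed

lemma not_connected_if_not_mem_side:
  assumes "e \<in> comp_edges H C" "e = {u, v}" "v \<notin> side C e u"
  shows "\<not> connected_graph C (comp_edges H C - {e})"
proof -
  have "u \<in> C" and "v \<in> C"
    using assms(1,2) unfolding comp_edges_def by auto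
  then show ?thesis
    using assms(3) unfolding side_def connected_graph_def by blast
qed

lemma bridge_if_not_mem_side:
  assumes C: "C \<in> comps V H" and e: "e \<in> comp_edges H C" "e = {u, v}" "v \<notin> side C e u"
  shows "e \<in> bridges V H" and "\<not> two_ec C (comp_edges H C)"
proof -
  show "\<not> two_ec C (comp_edges H C)"
    using not_connected_if_not_mem_side[OF e] e(1) unfolding two_ec_def by blast
  moreover have "e \<in> H" and "e \<subseteq> C"
    using e(1) unfolding comp_edges_def by auto
  ultimately show "e \<in> bridges V H"
    using C not_connected_if_not_mem_side[OF e] unfolding bridges_def by blast
qed

lemma rtrancl_adj_Int_side:
  assumes e: "e = {u, v}" "v \<notin> side C e u" and D: "D \<subseteq> comp_edges H C"
    and "(u, w) \<in> (adj D)\<^sup>*" and "w \<in> side C e u"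
  shows "(u, w) \<in> (adj (D \<inter> comp_edges H (side C e u)))\<^sup>*"
proof -
  let ?U = "side C e u"
  have "w \<in> ?U \<longrightarrow> (u, w) \<in> (adj (D \<inter> comp_edges H ?U))\<^sup>*"
    using assms(4)
  proof induction
    case (step z z')
    show ?case
    proof
      assume z': "z' \<in> ?U"
      obtain g where g: "g \<in> D" "z \<in> g" "z' \<in> g"
        using step.hyps(2) unfolding in_adj_iff by blast
      show "(u, z') \<in> (adj (D \<inter> comp_edges H ?U))\<^sup>*"
      proof (cases "g = e")
        case True
        then have "z' = u"
          using g(3) z' e by auto
        then show ?thesis
          by simp
      next
        case False
        then have "g \<subseteq> ?U"
          using edge_subset_side[OF z'] g D by blast
        then have "g \<in> D \<inter> comp_edges H ?U"
          using g(1) D unfolding comp_edges_def by blast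
        then have "(z, z') \<in> adj (D \<inter> comp_edges H ?U)"
          unfolding in_adj_iff using g(2,3) by blast
        moreover have "(u, z) \<in> (adj (D \<inter> comp_edges H ?U))\<^sup>*"
          using step.IH \<open>g \<subseteq> ?U\<close> g(2) by blast
        ultimately show ?thesis
          by simp
      qed
    qed
  qed simp
  then show ?thesis
    using assms(5) by blast
qed

lemma connected_side:
  assumes e: "e = {u, v}" "v \<notin> side C e u" and "u \<in> C"
    and D: "D \<subseteq> comp_edges H C" "connected_graph C D"
  shows "connected_graph (side C e u) (D \<inter> comp_edges H (side C e u))"
proof (rule connected_graphI)
  show "u \<in> side C e u"
    using mem_side_self[OF \<open>u \<in> C\<close>] .
  show "\<forall>g\<in>D \<inter> comp_edges H (side C e u). g \<subseteq> side C e u"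
    unfolding comp_edges_def by blast
next
  fix a
  assume a: "a \<in> side C e u"
  then have "(u, a) \<in> (adj D)\<^sup>*"
    using D(2) \<open>u \<in> C\<close> side_subset unfolding connected_graph_def by blast
  then show "(u, a) \<in> (adj (D \<inter> comp_edges H (side C e u)))\<^sup>*"
    using rtrancl_adj_Int_side[OF e D(1) _ a] by blast
qed

lemma two_ec_side:
  assumes C: "C \<in> comps V H" and e: "e = {u, v}" "v \<notin> side C e u" and "u \<in> C"
    and no_bridge: "\<And>f. f \<in> comp_edges H C \<Longrightarrow> f \<subseteq> side C e u
      \<Longrightarrow> connected_graph C (comp_edges H C - {f})"
  shows "two_ec (side C e u) (comp_edges H (side C e u))"
proof -
  let ?U = "side C e u"
  have sub: "comp_edges H ?U \<subseteq> comp_edges H C"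
    using side_subset unfolding comp_edges_def by blast
  have "connected_graph ?U (comp_edges H C \<inter> comp_edges H ?U)"
    using connected_side[OF e \<open>u \<in> C\<close> _ connected_component[OF C]] by blast
  moreover have "connected_graph ?U ((comp_edges H C - {f}) \<inter> comp_edges H ?U)"
    if "f \<in> comp_edges H ?U" for f
  proof -
    have "connected_graph C (comp_edges H C - {f})"
      using no_bridge that sub unfolding comp_edges_def by blast
    then show ?thesis
      using connected_side[OF e \<open>u \<in> C\<close>] by blast
  qed
  moreover have "comp_edges H C \<inter> comp_edges H ?U = comp_edges H ?U"
    and "(comp_edges H C - {f}) \<inter> comp_edges H ?U = comp_edges H ?U - {f}" for f
    using sub by auto
  ultimately show ?thesis
    unfolding two_ec_def by auto
qed

lemma two_le_card_side:
  assumes C: "C \<in> comps V H" and e: "e \<in> comp_edges H C" "e = {u, v}" "v \<notin> side C e u"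
  shows "2 \<le> card (side C e u)"
proof -
  have "u \<in> C"
    using e(1,2) unfolding comp_edges_def by auto
  then have "2 \<le> card {g \<in> H. u \<in> g}"
    using degree component_subset[OF C] by blast
  moreover have "card {g \<in> H. u \<in> g} \<le> 1" if "{g \<in> H. u \<in> g} \<subseteq> {e}"
    using card_mono[OF _ that] by simp
  ultimately obtain g where g: "g \<in> H" "u \<in> g" "g \<noteq> e"
    by force
  obtain x y where "g = {x, y}" "x \<noteq> y"
    using edgeE[OF g(1)] .
  then obtain w where "w \<in> g" "w \<noteq> u"
    by blast
  have "g \<in> comp_edges H C - {e}"
    using g edge_subset_component[OF C \<open>u \<in> C\<close>] unfolding comp_edges_def by blast
  then have "g \<subseteq> side C e u"
    using edge_subset_side[OF mem_side_self[OF \<open>u \<in> C\<close>]] g(2) by blast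
  then have "card {u, w} \<le> card (side C e u)"
    using \<open>w \<in> g\<close> g(2) by (intro card_mono[OF finite_side[OF C]]) blast
  then show ?thesis
    using \<open>w \<noteq> u\<close> by simp
qed

lemma side_in_blocks:
  assumes C: "C \<in> comps V H" and e: "e \<in> comp_edges H C" "e = {u, v}" "v \<notin> side C e u"
    and two_ec: "two_ec (side C e u) (comp_edges H (side C e u))"
  shows "(side C e u, comp_edges H (side C e u)) \<in> blocks V H"
proof -
  let ?U = "side C e u"
  have "u \<in> C"
    using e(1,2) unfolding comp_edges_def by auto
  have maximal: "\<forall>S' F'. ?U \<subseteq> S' \<and> comp_edges H ?U \<subseteq> F' \<and> S' \<subseteq> C
      \<and> F' \<subseteq> comp_edges H C \<and> two_ec S' F' \<longrightarrow> S' = ?U \<and> F' = comp_edges H ?U"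
  proof (intro allI impI)
    fix S' F'
    assume "?U \<subseteq> S' \<and> comp_edges H ?U \<subseteq> F' \<and> S' \<subseteq> C \<and> F' \<subseteq> comp_edges H C \<and> two_ec S' F'"
    then have that: "?U \<subseteq> S'" "comp_edges H ?U \<subseteq> F'" "F' \<subseteq> comp_edges H C" "two_ec S' F'"
      by blast+
    have "S' \<subseteq> ?U"
    proof
      fix s
      assume "s \<in> S'"
      then have "(u, s) \<in> (adj (F' - {e}))\<^sup>*"
        using two_ec_connected_Diff[OF that(4)] mem_side_self[OF \<open>u \<in> C\<close>] that(1)
        unfolding connected_graph_def by blast
      then have "(u, s) \<in> (adj (comp_edges H C - {e}))\<^sup>*"
        by (rule rtrancl_adj_mono[rotated]) (use that(3) in blast)
      then show "s \<in> ?U"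
        using mem_side_if_reach[OF \<open>u \<in> C\<close>] by blast
    qed
    moreover have "F' \<subseteq> comp_edges H ?U"
      using two_ec_edge_subset[OF that(4)] that(3) \<open>S' \<subseteq> ?U\<close> unfolding comp_edges_def by blast
    ultimately show "S' = ?U \<and> F' = comp_edges H ?U"
      using that(1,2) by blast
  qed
  have "comp_edges H ?U \<subseteq> comp_edges H C"
    using side_subset unfolding comp_edges_def by blast
  with C bridge_if_not_mem_side(2)[OF C e] side_subset two_ec two_le_card_side[OF C e] maximal
  show ?thesis
    unfolding blocks_def by blast
qed

lemma leaf_block_side:
  assumes C: "C \<in> comps V H" and e: "e \<in> comp_edges H C" "e = {u, v}" "v \<notin> side C e u"
    and no_bridge: "\<And>f. f \<in> comp_edges H C \<Longrightarrow> f \<subseteq> side C e u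
      \<Longrightarrow> connected_graph C (comp_edges H C - {f})"
  shows "leaf_block V H (side C e u)"
proof -
  let ?U = "side C e u"
  have "u \<in> C"
    using e(1,2) unfolding comp_edges_def by auto
  have "{g \<in> bridges V H. g \<inter> ?U \<noteq> {}} = {e}"
  proof (intro equalityI subsetI)
    fix g
    assume "g \<in> {g \<in> bridges V H. g \<inter> ?U \<noteq> {}}"
    then obtain C0 z where g: "g \<in> H" "C0 \<in> comps V H" "g \<subseteq> C0"
      "\<not> connected_graph C0 (comp_edges H C0 - {g})" and z: "z \<in> g" "z \<in> ?U"
      unfolding bridges_def by blast
    have "C0 = C"
      using components_eq[OF g(2) C, of z] z g(3) side_subset by blast
    show "g \<in> {e}"
    proof (rule ccontr)
      assume "g \<notin> {e}"
      then have "g \<in> comp_edges H C - {e}"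
        using g \<open>C0 = C\<close> unfolding comp_edges_def by blast
      then have "g \<subseteq> ?U"
        using edge_subset_side z by blast
      then show False
        using no_bridge[of g] \<open>g \<in> comp_edges H C - {e}\<close> g(4) \<open>C0 = C\<close> by blast
    qed
  next
    fix g
    assume "g \<in> {e}"
    then show "g \<in> {g \<in> bridges V H. g \<inter> ?U \<noteq> {}}"
      using bridge_if_not_mem_side(1)[OF C e] mem_side_self[OF \<open>u \<in> C\<close>] e(2) by blast
  qed
  then show ?thesis
    unfolding leaf_block_def by simp
qed

lemma smaller_side:
  assumes C: "C \<in> comps V H" and e: "e \<in> comp_edges H C" "e = {u, v}" "v \<notin> side C e u"
    and f: "f \<in> comp_edges H C" "f \<subseteq> side C e u" "\<not> connected_graph C (comp_edges H C - {f})"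
  obtains p q where "f = {p, q}" "q \<notin> side C f p" "side C f p \<subset> side C e u"
proof -
  let ?R = "adj (comp_edges H C - {f})"
  have "u \<in> C"
    using e(1,2) unfolding comp_edges_def by auto
  obtain x y where xy: "f = {x, y}"
    using edgeE f(1) unfolding comp_edges_def by blast
  then have xy_apart: "(x, y) \<notin> ?R\<^sup>*"
    using connected_Diff_edge_if_reach[OF C, of f x y] f(3) by blast
  txt \<open>At most one endpoint of \<open>f\<close> reaches \<open>v\<close> in \<open>C - f\<close>; start from the other one.\<close>
  obtain p q where pq: "f = {p, q}" "(p, q) \<notin> ?R\<^sup>*" "(p, v) \<notin> ?R\<^sup>*"
  proof (cases "(x, v) \<in> ?R\<^sup>*")
    case True
    have "(y, v) \<notin> ?R\<^sup>*"
    proof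
      assume "(y, v) \<in> ?R\<^sup>*"
      then have "(x, y) \<in> ?R\<^sup>*"
        using rtrancl_trans[OF True rtrancl_adj_sym] by blast
      then show False
        using xy_apart by blast
    qed
    moreover have "(y, x) \<notin> ?R\<^sup>*"
      using xy_apart rtrancl_adj_sym[of y x] by blast
    moreover have "f = {y, x}"
      using xy by blast
    ultimately show ?thesis
      using that by blast
  next
    case False
    then show ?thesis
      using that xy xy_apart by blast
  qed
  have "side C f p \<subseteq> side C e u"
  proof
    fix z
    assume "z \<in> side C f p"
    then have "(p, z) \<in> ?R\<^sup>*"
      unfolding side_def by blast
    then show "z \<in> side C e u"
    proof induction
      case base
      show ?case
        using pq(1) f(2) by blast
    next
      case (step z z')
      obtain g where g: "g \<in> comp_edges H C - {f}" "z \<in> g" "z' \<in> g"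
        using step.hyps(2) unfolding in_adj_iff by blast
      show ?case
      proof (cases "g = e")
        case True
        have "(p, z') \<in> ?R\<^sup>*"
          using step.hyps by simp
        then have "z' \<noteq> v"
          using pq(3) by blast
        then show ?thesis
          using True g(3) e(2) mem_side_self[OF \<open>u \<in> C\<close>] by blast
      next
        case False
        then show ?thesis
          using edge_subset_side[OF step.IH] g by blast
      qed
    qed
  qed
  moreover have "q \<notin> side C f p"
    using pq(2) unfolding side_def by blast
  moreover have "q \<in> side C e u"
    using pq(1) f(2) by blast
  ultimately show ?thesis
    using that pq(1) by blast
qed

lemma leaf_block_in_side:
  assumes C: "C \<in> comps V H"
  shows "e \<in> comp_edges H C \<Longrightarrow> e = {u, v} \<Longrightarrow> v \<notin> side C e u
    \<Longrightarrow> \<exists>S F. (S, F) \<in> blocks V H \<and> leaf_block V H S \<and> S \<subseteq> side C e u"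
proof (induction "card (side C e u)" arbitrary: e u v rule: less_induct)
  case less
  show ?case
  proof (cases "\<exists>f\<in>comp_edges H C. f \<subseteq> side C e u \<and> \<not> connected_graph C (comp_edges H C - {f})")
    case True
    then obtain f where f: "f \<in> comp_edges H C" "f \<subseteq> side C e u"
      "\<not> connected_graph C (comp_edges H C - {f})"
      by blast
    obtain p q where pq: "f = {p, q}" "q \<notin> side C f p" "side C f p \<subset> side C e u"
      using smaller_side[OF C less.prems f] .
    then have "card (side C f p) < card (side C e u)"
      using psubset_card_mono[OF finite_side[OF C]] by blast
    then obtain S F where "(S, F) \<in> blocks V H" "leaf_block V H S" "S \<subseteq> side C f p"
      using less.hyps f(1) pq(1,2) by blast
    then show ?thesis
      using pq(3) by blast
  next
    case False
    have "u \<in> C"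
      using less.prems(1,2) unfolding comp_edges_def by auto
    then have "two_ec (side C e u) (comp_edges H (side C e u))"
      using two_ec_side[OF C less.prems(2,3)] False by blast
    then show ?thesis
      using side_in_blocks[OF C less.prems] leaf_block_side[OF C less.prems] False by blast
  qed
qed

lemma two_leaf_blocks:
  assumes C: "C \<in> comps V H" and "\<not> two_ec C (comp_edges H C)"
  obtains S1 F1 S2 F2 where "(S1, F1) \<in> blocks V H" "(S2, F2) \<in> blocks V H"
    "leaf_block V H S1" "leaf_block V H S2" "S1 \<subseteq> C" "S2 \<subseteq> C" "S1 \<noteq> S2"
proof -
  obtain e where e: "e \<in> comp_edges H C" "\<not> connected_graph C (comp_edges H C - {e})"
    using assms connected_component unfolding two_ec_def by blast
  obtain u v where uv: "e = {u, v}"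
    using edgeE e(1) unfolding comp_edges_def by blast
  let ?R = "adj (comp_edges H C - {e})"
  have apart: "(u, v) \<notin> ?R\<^sup>*"
    using connected_Diff_edge_if_reach[OF C, of e u v] uv e(2) by blast
  then have "v \<notin> side C e u" and "u \<notin> side C e v"
    using rtrancl_adj_sym[of v u] unfolding side_def by blast+
  have "(u, v) \<in> ?R\<^sup>*" if "(u, z) \<in> ?R\<^sup>*" and "(v, z) \<in> ?R\<^sup>*" for z
    using rtrancl_trans[OF that(1) rtrancl_adj_sym[OF that(2)]] .
  then have "side C e u \<inter> side C e v = {}"
    using apart unfolding side_def by blast
  obtain S1 F1 where b1: "(S1, F1) \<in> blocks V H" "leaf_block V H S1" "S1 \<subseteq> side C e u"
    using leaf_block_in_side[OF C e(1) uv \<open>v \<notin> side C e u\<close>] by blast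
  obtain S2 F2 where b2: "(S2, F2) \<in> blocks V H" "leaf_block V H S2" "S2 \<subseteq> side C e v"
    using leaf_block_in_side[OF C e(1) _ \<open>u \<notin> side C e v\<close>] uv by blast
  have "S1 \<noteq> {}"
    using b1(1) unfolding blocks_def by fastforce
  then have "S1 \<noteq> S2"
    using b1(3) b2(3) \<open>side C e u \<inter> side C e v = {}\<close> by blast
  moreover have "S1 \<subseteq> C" and "S2 \<subseteq> C"
    using b1(3) b2(3) side_subset by blast+
  ultimately show ?thesis
    using that[OF b1(1) b2(1) b1(2) b2(2)] by blast
qed

abbreviation two_ec_comps :: "'a set set" where
  "two_ec_comps \<equiv> {C \<in> comps V H. two_ec C (comp_edges H C)}"

abbreviation non_two_ec_comps :: "'a set set" where
  "non_two_ec_comps \<equiv> {C \<in> comps V H. \<not> two_ec C (comp_edges H C)}"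

lemma sum_comp_credit:
  "(\<Sum>C\<in>comps V H. comp_credit H C) = (\<Sum>C\<in>two_ec_comps. comp_credit H C) + real (card non_two_ec_comps)"
proof -
  have "(\<Sum>C\<in>comps V H. comp_credit H C)
      = (\<Sum>C\<in>two_ec_comps \<union> non_two_ec_comps. comp_credit H C)"
    by (rule sum.cong) auto
  also have "\<dots> = (\<Sum>C\<in>two_ec_comps. comp_credit H C) + (\<Sum>C\<in>non_two_ec_comps. comp_credit H C)"
    by (rule sum.union_disjoint) (use finite_comps in auto)
  also have "(\<Sum>C\<in>non_two_ec_comps. comp_credit H C) = real (card non_two_ec_comps)"
    unfolding comp_credit_def by simp
  finally show ?thesis .
qed

lemma sum_comp_credit_two_ec_comps_le:
  "(\<Sum>C\<in>two_ec_comps. comp_credit H C)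
    \<le> 3/10 * (\<Sum>C\<in>two_ec_comps. real (card (comp_edges H C))) + real (card (triangle_edges V H)) / 30"
proof -
  let ?k = "\<lambda>C. real (card (comp_edges H C))"
  let ?T = "{C \<in> two_ec_comps. is_cycle C (comp_edges H C) 3}"
  have fin: "finite two_ec_comps"
    using finite_comps by simp
  have "triangle_edges V H = \<Union>(comp_edges H ` ?T)"
    unfolding triangle_edges_def by blast
  then have "real (card (triangle_edges V H)) = (\<Sum>C\<in>?T. ?k C)"
    using card_Union_comp_edges[of ?T] by simp
  have "(\<Sum>C\<in>two_ec_comps. comp_credit H C)
      \<le> (\<Sum>C\<in>two_ec_comps. 3/10 * ?k C + (if is_cycle C (comp_edges H C) 3 then ?k C / 30 else 0))"
    by (rule sum_mono, rule comp_credit_le) simp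
  also have "\<dots> = 3/10 * (\<Sum>C\<in>two_ec_comps. ?k C) + (\<Sum>C\<in>?T. ?k C / 30)"
    using sum.inter_filter[OF fin, of "\<lambda>C. ?k C / 30"] by (simp add: sum.distrib sum_distrib_left)
  also have "(\<Sum>C\<in>?T. ?k C / 30) = real (card (triangle_edges V H)) / 30"
    using \<open>real (card (triangle_edges V H)) = (\<Sum>C\<in>?T. ?k C)\<close> by (simp add: sum_divide_distrib)
  finally show ?thesis .
qed

lemma card_edges_of_two_ec_comps_bridges_blocks_le:
  "(\<Sum>C\<in>two_ec_comps. card (comp_edges H C)) + card (bridges V H) + (\<Sum>b\<in>blocks V H. card (snd b))
    \<le> card H"
proof -
  define X where "X = \<Union>(comp_edges H ` two_ec_comps)"
  define Y where "Y = \<Union>(snd ` blocks V H)"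
  let ?N = "\<Union>(comp_edges H ` non_two_ec_comps)"
  have X_H: "X \<subseteq> H" and N_H: "?N \<subseteq> H"
    unfolding X_def comp_edges_def by blast+
  have bridges_N: "bridges V H \<subseteq> ?N"
    unfolding bridges_def comp_edges_def by blast
  have Y_N: "Y \<subseteq> ?N"
    unfolding Y_def blocks_def by auto
  have card_X: "card X = (\<Sum>C\<in>two_ec_comps. card (comp_edges H C))"
    unfolding X_def by (rule card_Union_comp_edges) blast
  have "finite (snd b)" if "b \<in> blocks V H" for b
  proof (rule finite_subset[OF _ finite_H])
    show "snd b \<subseteq> H"
      using that Y_N N_H unfolding Y_def by blast
  qed
  moreover have "\<forall>b\<in>blocks V H. \<forall>b'\<in>blocks V H. b \<noteq> b' \<longrightarrow> snd b \<inter> snd b' = {}"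
    using blocks_eq_if_common_edge by fastforce
  ultimately have card_Y: "card Y = (\<Sum>b\<in>blocks V H. card (snd b))"
    unfolding Y_def by (intro card_UN_disjoint[OF finite_blocks]) blast+
  have "X \<inter> ?N = {}"
    unfolding X_def using comp_edges_disjoint by blast
  then have "X \<inter> (bridges V H \<union> Y) = {}"
    using bridges_N Y_N by blast
  moreover have "bridges V H \<inter> Y = {}"
    unfolding Y_def using block_edge_not_bridge by force
  moreover have "finite X" and "finite (bridges V H)" and "finite Y"
    using X_H bridges_N Y_N N_H finite_H by (meson finite_subset subset_trans)+
  ultimately have "card (X \<union> (bridges V H \<union> Y)) = card X + card (bridges V H) + card Y"
    by (simp add: card_Un_disjoint)
  moreover have "card (X \<union> (bridges V H \<union> Y)) \<le> card H"
    using X_H bridges_N Y_N N_H by (intro card_mono[OF finite_H]) blast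
  ultimately show ?thesis
    using card_X card_Y by simp
qed

end

locale block_size_bounds = finite_two_edge_cover +
  assumes block_size: "(S, F) \<in> blocks V H \<Longrightarrow> 4 \<le> card F"
    and leaf_block_size: "(S, F) \<in> blocks V H \<Longrightarrow> leaf_block V H S \<Longrightarrow> 6 \<le> card F"
begin

lemma one_le_block_surplus:
  assumes "C \<in> non_two_ec_comps"
  shows "1 \<le> (\<Sum>b\<in>{b \<in> blocks V H. fst b \<subseteq> C}. 3/10 * real (card (snd b)) - 1)"
proof -
  let ?B = "{b \<in> blocks V H. fst b \<subseteq> C}"
  let ?surplus = "\<lambda>b. 3/10 * real (card (snd b)) - 1"
  obtain S1 F1 S2 F2 where b: "(S1, F1) \<in> blocks V H" "(S2, F2) \<in> blocks V H"
    "leaf_block V H S1" "leaf_block V H S2" "S1 \<subseteq> C" "S2 \<subseteq> C" "S1 \<noteq> S2"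
    using two_leaf_blocks assms by blast
  have "?surplus (S1, F1) + ?surplus (S2, F2) \<ge> 1"
    using leaf_block_size[OF b(1,3)] leaf_block_size[OF b(2,4)] by simp
  also have "?surplus (S1, F1) + ?surplus (S2, F2) = (\<Sum>b\<in>{(S1, F1), (S2, F2)}. ?surplus b)"
    using b(7) by simp
  also have "\<dots> \<le> (\<Sum>b\<in>?B. ?surplus b)"
  proof (rule sum_mono2)
    show "finite ?B"
      using finite_blocks by simp
    show "{(S1, F1), (S2, F2)} \<subseteq> ?B"
      using b by simp
    show "0 \<le> ?surplus b" if "b \<in> ?B - {(S1, F1), (S2, F2)}" for b
      using that block_size[of "fst b" "snd b"] by simp
  qed
  finally show ?thesis .
qed

lemma card_blocks_add_card_non_two_ec_comps_le:
  "real (card (blocks V H)) + real (card non_two_ec_comps) \<le> 3/10 * (\<Sum>b\<in>blocks V H. real (card (snd b)))"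
proof -
  define surplus where "surplus b = 3/10 * real (card (snd b)) - 1" for b :: "'a set \<times> 'a set set"
  let ?B = "\<lambda>C. {b \<in> blocks V H. fst b \<subseteq> C}"
  have fin: "finite non_two_ec_comps"
    using finite_comps by simp
  have disjoint: "?B C \<inter> ?B C' = {}" if "C \<in> non_two_ec_comps" "C' \<in> non_two_ec_comps" "C \<noteq> C'" for C C'
  proof -
    have "fst b \<noteq> {}" if "b \<in> blocks V H" for b
      using that unfolding blocks_def by fastforce
    then show ?thesis
      using that components_eq by blast
  qed
  have "real (card non_two_ec_comps) = (\<Sum>C\<in>non_two_ec_comps. 1)"
    by simp
  also have "\<dots> \<le> (\<Sum>C\<in>non_two_ec_comps. \<Sum>b\<in>?B C. surplus b)"
    by (rule sum_mono) (use one_le_block_surplus in \<open>simp add: surplus_def\<close>)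
  also have "\<dots> = (\<Sum>b\<in>\<Union>(?B ` non_two_ec_comps). surplus b)"
    using finite_blocks disjoint by (intro sum.UNION_disjoint[OF fin, symmetric]) auto
  also have "\<dots> \<le> (\<Sum>b\<in>blocks V H. surplus b)"
    using finite_blocks block_size unfolding surplus_def by (intro sum_mono2) force+
  also have "\<dots> = 3/10 * (\<Sum>b\<in>blocks V H. real (card (snd b))) - real (card (blocks V H))"
    unfolding surplus_def by (simp add: sum_subtractf sum_distrib_left)
  finally show ?thesis
    by simp
qed

lemma credits_le:
  "credits V H
    \<le> 3/10 * real (card H) + real (card (triangle_edges V H)) / 30 - real (card (bridges V H)) / 20"
proof -
  have "real ((\<Sum>C\<in>two_ec_comps. card (comp_edges H C)) + card (bridges V H)
      + (\<Sum>b\<in>blocks V H. card (snd b))) \<le> real (card H)"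
    using card_edges_of_two_ec_comps_bridges_blocks_le by (simp only: of_nat_le_iff)
  then have "(\<Sum>C\<in>two_ec_comps. real (card (comp_edges H C))) + real (card (bridges V H))
      + (\<Sum>b\<in>blocks V H. real (card (snd b))) \<le> real (card H)"
    by simp
  then show ?thesis
    unfolding credits_def sum_comp_credit
    using sum_comp_credit_two_ec_comps_le card_blocks_add_card_non_two_ec_comps_le by linarith
qed

end

theorem lemma6:
  fixes V :: "'a set" and E H :: "'a set set" and b t :: real
  assumes "simple_graph V E"
    and "canonical V E H"
    and "real (card (bridges V H)) = b * real (card H)"
    and "real (card (triangle_edges V H)) = t * real (card H)"
  shows "cost V H \<le> (13/10 + t/30 - b/20) * real (card H)"
proof -
  have cover: "two_edge_cover V E H"
    and sizes: "\<forall>(S, F)\<in>blocks V H. (leaf_block V H S \<longrightarrow> 6 \<le> card F) \<and> (\<not> leaf_block V H S \<longrightarrow> 4 \<le> card F)"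
    using assms(2) unfolding canonical_def by blast+
  interpret block_size_bounds V H
  proof
    show "finite V" and "\<forall>e\<in>H. e \<subseteq> V \<and> card e = 2" and "\<forall>v\<in>V. 2 \<le> card {e \<in> H. v \<in> e}"
      using assms(1) cover unfolding simple_graph_def two_edge_cover_def by blast+
    show "4 \<le> card F" if "(S, F) \<in> blocks V H" for S F
      using sizes that by (cases "leaf_block V H S") auto
    show "6 \<le> card F" if "(S, F) \<in> blocks V H" "leaf_block V H S" for S F
      using sizes that by auto
  qed
  have "cost V H \<le> 13/10 * real (card H) + real (card (triangle_edges V H)) / 30 - real (card (bridges V H)) / 20"
    using credits_le unfolding cost_def by simp
  then show ?thesis
    using assms(3,4) by (simp add: algebra_simps)
qed

end
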